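(* Let $q$ be a power of an odd prime, $a\in\mathbb{F}_q^*$ with $a\neq\pm1$, $b\in\mathbb{F}_q$ a nonsquare, $\beta\in\mathbb{F}_{q^2}$ with $\beta^2=b$, and $f(X)=X^{q+1}+aX^2$ on $\mathbb{F}_{q^2}$. For $\gamma\in\mathbb{F}_{q^2}$ let $f^{-1}(\gamma)=\{X\in\mathbb{F}_{q^2}: f(X)=\gamma\}$. Let $\alpha\in\mathbb{F}_q^*$. Then: (1) $\#f^{-1}(\alpha)=0$ if $\chi_2(\alpha(a-1))=1$ and $\chi_2(\alpha(a+1))=-1$; $\#f^{-1}(\alpha)=4$ if $\chi_2(\alpha(a-1))=-1$ and $\chi_2(\alpha(a+1))=1$; and $\#f^{-1}(\alpha)=2$ otherwise. (2) If $q\equiv3\pmod4$, then $\#f^{-1}(\alpha\beta)=0$ if $\chi_2(1-a^2)=1$ and $\#f^{-1}(\alpha\beta)=2$ if $\chi_2(1-a^2)=-1$. (3) If $q\equiv1\pmod4$, then $\#f^{-1}(\alpha\beta)=4$ if $\chi_2(1-a^2)=-1$ and $\chi_2(2\gamma_a\alpha a)=1$, and $\#f^{-1}(\alpha\beta)=0$ otherwise, where (when $\chi_2(1-a^2)=-1$) $\gamma_a\in\mathbb{F}_q$ satisfies $\gamma_a^2=-\frac{(a-1)b}{a+1}$.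
   Context: $\chi_2$ is the quadratic character of $\mathbb{F}_q$: $\chi_2(\alpha)=1$ if $\alpha$ is a nonzero square, $-1$ if $\alpha$ is a nonsquare, $0$ if $\alpha=0$. *)

theory Defs
  imports "HOL-Computational_Algebra.Primes"
begin

text \<open>The field F_{q^2} is modelled as a finite field type of cardinality q^2;
  its subfield F_q is the fixed field of the Frobenius X \<mapsto> X^q.\<close>

definition Fq :: "nat \<Rightarrow> 'a::field set" where
  "Fq q = {x. x ^ q = x}"

definition chi2 :: "nat \<Rightarrow> 'a::field \<Rightarrow> int" where
  "chi2 q x = (if x = 0 then 0 else if (\<exists>y\<in>Fq q. y ^ 2 = x) then 1 else -1)"

definition fmap :: "nat \<Rightarrow> 'a::field \<Rightarrow> 'a \<Rightarrow> 'a" where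
  "fmap q a X = X ^ (q + 1) + a * X ^ 2"

end

theory Submission
  imports Defs "HOL-Computational_Algebra.Polynomial"
begin

text \<open>Since \<beta> is not in F_q, every X is uniquely x + y\<beta> with x, y in F_q, and \<beta>^q = -\<beta> turns
  X^(q+1) into the norm x^2 - b y^2, so that f(x + y\<beta>) = ((1+a) x^2 + (a-1) b y^2) + 2axy \<beta>.
  Over \<alpha> in F_q the \<beta>-part forces x = 0 or y = 0, leaving the square roots of \<alpha>/(1+a) and
  of \<alpha>/((a-1) b).  Over \<alpha>\<beta> one gets y = \<alpha>/(2ax) and x^4 = (\<alpha>/2a)^2 \<gamma>_a^2, where
  \<chi>(\<gamma>_a^2) = -\<chi>(1 - a^2).  When \<gamma>_a exists, the solutions are the square roots of
  \<plusminus>\<gamma>_a \<alpha>/(2a), and \<chi>(-1) = (-1)^((q-1)/2) decides how many of the two signs contribute.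
  Characters are evaluated by Euler's criterion \<chi>(x) = x^((q-1)/2), which follows by comparing
  the (q-1)/2 nonzero squares of F_q with the at most (q-1)/2 roots of X^((q-1)/2) - 1.\<close>

section \<open>Finite fields\<close>

text \<open>The library's \<open>finite_field_power_card_eq_same\<close> needs the sort \<open>finite_field\<close>.\<close>

lemma field_power_card_eq_self:
  fixes x :: "'a::{field,finite}"
  shows "x ^ card (UNIV :: 'a set) = x"
proof (cases "x = 0")
  case True
  then show ?thesis using finite_UNIV_card_ge_0[where ?'a = 'a] by simp
next
  case False
  define U where "U = UNIV - {0::'a}"
  have "(\<Prod>y\<in>U. x * y) = \<Prod>U"
    unfolding U_def
    by (rule prod.reindex_bij_witness[of _ "\<lambda>y. y / x" "\<lambda>y. x * y"]) (use False in auto)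
  moreover have "(\<Prod>y\<in>U. x * y) = x ^ card U * \<Prod>U"
    by (simp add: prod.distrib)
  moreover have "\<Prod>U \<noteq> 0"
    unfolding U_def by (subst prod_zero_iff) auto
  ultimately have "x ^ card U = 1"
    by simp
  moreover have "card (UNIV :: 'a set) = Suc (card U)"
    unfolding U_def using card_Suc_Diff1[OF finite_UNIV UNIV_I] by metis
  ultimately show ?thesis by simp
qed

lemma of_nat_card_UNIV_eq_0: "of_nat (card (UNIV :: 'a::{ring_1,finite} set)) = (0::'a)"
proof -
  have "(\<Sum>y\<in>UNIV. y + 1) = (\<Sum>y\<in>(UNIV::'a set). y)"
    by (rule sum.reindex_bij_witness[of _ "\<lambda>y. y - 1" "\<lambda>y. y + 1"]) auto
  then show ?thesis by (simp add: sum.distrib)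
qed

lemma CHAR_eq_prime_if_card_UNIV_eq_power:
  assumes "prime p" and "card (UNIV :: 'a::{field,finite} set) = p ^ n"
  shows "CHAR('a) = p"
proof -
  have "prime CHAR('a)"
    using prime_CHAR_semidom finite_imp_CHAR_pos[OF finite_UNIV] by blast
  moreover have "of_nat (p ^ n) = (0::'a)"
    using of_nat_card_UNIV_eq_0[where ?'a = 'a] assms(2) by simp
  then have "CHAR('a) dvd p ^ n"
    by (simp only: of_nat_eq_0_iff_char_dvd)
  ultimately show ?thesis
    using assms(1) prime_dvd_power primes_dvd_imp_eq by blast
qed

lemma card_roots_unity_le:
  assumes "n > 0"
  shows "card {x::'a::idom. x ^ n = 1} \<le> n"
proof -
  define P :: "'a poly" where "P = monom 1 n - 1"
  have "{x. x ^ n = 1} = {x. poly P x = 0}"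
    unfolding P_def by (simp add: poly_monom)
  moreover have "poly P 0 = -1"
    unfolding P_def using assms by (simp add: poly_monom)
  then have "P \<noteq> 0" by auto
  moreover have "degree P \<le> n"
    unfolding P_def by (intro degree_diff_le) (auto simp: degree_monom_le)
  ultimately show ?thesis
    using card_poly_roots_bound[of P] by simp
qed

lemma Fq_1 [simp]: "1 \<in> Fq q"
  by (simp add: Fq_def)

lemma Fq_mult: "x \<in> Fq q \<Longrightarrow> y \<in> Fq q \<Longrightarrow> x * y \<in> Fq q"
  by (simp add: Fq_def power_mult_distrib)

lemma Fq_divide: "x \<in> Fq q \<Longrightarrow> y \<in> Fq q \<Longrightarrow> x / y \<in> Fq q"
  by (simp add: Fq_def power_divide)

lemma Fq_power: "x \<in> Fq q \<Longrightarrow> x ^ n \<in> Fq q"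
  by (induction n) (simp_all add: Fq_mult)

lemma chi2_cases: "x \<noteq> 0 \<Longrightarrow> chi2 q x = 1 \<or> chi2 q x = -1"
  by (simp add: chi2_def)

lemma chi2_square: "r \<in> Fq q \<Longrightarrow> r \<noteq> 0 \<Longrightarrow> chi2 q (r ^ 2) = 1"
  by (auto simp: chi2_def)

lemma fourth_power_neq_if_nonsquare:
  assumes "chi2 q t = -1" and "w \<in> Fq q" and "w \<noteq> 0" and "x \<in> Fq q"
  shows "x ^ 4 \<noteq> w ^ 2 * t"
proof
  assume "x ^ 4 = w ^ 2 * t"
  then have "(x ^ 2 / w) ^ 2 = t"
    using assms(3) by (simp add: power_divide flip: power_mult)
  moreover have "x ^ 2 / w \<in> Fq q"
    using assms by (simp add: Fq_divide Fq_power)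
  ultimately have "chi2 q t = 1"
    using assms(1) by (auto simp: chi2_def split: if_splits)
  with assms(1) show False by simp
qed

section \<open>Points on two conics\<close>

lemma card_conic_on_axes:
  fixes c d e u :: "'a::field"
  assumes "finite F" and "0 \<in> F" and "c \<noteq> 0" and "d \<noteq> 0" and "e \<noteq> 0" and "u \<noteq> 0"
  shows "card {(x, y) \<in> F \<times> F. c * x ^ 2 + d * y ^ 2 = u \<and> e * x * y = 0} =
           card {x \<in> F. x ^ 2 = u / c} + card {y \<in> F. y ^ 2 = u / d}"
proof -
  let ?A = "{x \<in> F. x ^ 2 = u / c}" and ?B = "{y \<in> F. y ^ 2 = u / d}"
  have "{(x, y) \<in> F \<times> F. c * x ^ 2 + d * y ^ 2 = u \<and> e * x * y = 0} =
        (\<lambda>x. (x, 0)) ` ?A \<union> (\<lambda>y. (0, y)) ` ?B"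
    using assms by (auto simp: eq_divide_eq mult.commute)
  moreover have "(\<lambda>x. (x, 0)) ` ?A \<inter> (\<lambda>y. (0, y)) ` ?B = {}"
    using assms by auto
  ultimately show ?thesis
    using assms(1) by (simp add: card_Un_disjoint card_image inj_on_def)
qed

lemma card_conic_hyperbola:
  fixes c d e v :: "'a::field"
  assumes div_closed: "\<And>x y. x \<in> F \<Longrightarrow> y \<in> F \<Longrightarrow> x / y \<in> F"
    and "v \<in> F" and "e \<in> F" and "c \<noteq> 0" and "d \<noteq> 0" and "e \<noteq> 0" and "v \<noteq> 0"
  shows "card {(x, y) \<in> F \<times> F. c * x ^ 2 + d * y ^ 2 = 0 \<and> e * x * y = v} =
           card {x \<in> F. x ^ 4 = - d / c * (v / e) ^ 2}"
proof -
  define w where "w = v / e"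
  have "w \<in> F" and "w \<noteq> 0"
    using assms by (auto simp: w_def)
  have quartic_iff: "c * x ^ 2 + d * (w / x) ^ 2 = 0 \<longleftrightarrow> x ^ 4 = - d / c * w ^ 2"
    if "x \<noteq> 0" for x
  proof -
    have "c * x ^ 2 + d * (w / x) ^ 2 = (c * x ^ 4 + d * w ^ 2) / x ^ 2"
      using that by (simp add: field_simps power2_eq_square power4_eq_xxxx)
    then show ?thesis
      using that \<open>c \<noteq> 0\<close> by (simp add: field_simps eq_neg_iff_add_eq_0 add.commute)
  qed
  have "{(x, y) \<in> F \<times> F. c * x ^ 2 + d * y ^ 2 = 0 \<and> e * x * y = v} =
        (\<lambda>x. (x, w / x)) ` {x \<in> F. x ^ 4 = - d / c * w ^ 2}"
  proof -
    have "e * x * y = v \<longleftrightarrow> x \<noteq> 0 \<and> y = w / x" for x y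
      using assms by (auto simp: w_def field_simps)
    moreover have "x ^ 4 = - d / c * w ^ 2 \<Longrightarrow> x \<noteq> 0" for x
      using assms \<open>w \<noteq> 0\<close> by auto
    ultimately show ?thesis
      using quartic_iff div_closed \<open>w \<in> F\<close> by auto
  qed
  moreover have "inj_on (\<lambda>x. (x, w / x)) A" for A
    by (simp add: inj_on_def)
  ultimately show ?thesis
    by (simp add: card_image w_def)
qed

section \<open>The quadratic extension F_q(\<beta>)\<close>

locale quadratic_extension =
  fixes p k q :: nat and b \<beta> :: "'a::{field,finite}"
  assumes prime_p: "prime p" and odd_p: "odd p" and q_eq: "q = p ^ k"
    and card_UNIV_eq: "card (UNIV :: 'a set) = q ^ 2"
    and b_in_Fq: "b \<in> Fq q" and b_nonsquare: "chi2 q b = -1" and beta_square: "\<beta> ^ 2 = b"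
begin

lemma CHAR_eq: "CHAR('a) = p"
  using CHAR_eq_prime_if_card_UNIV_eq_power[OF prime_p, of "k * 2"] card_UNIV_eq q_eq
  by (simp add: power_mult)

lemma odd_q: "odd q"
  using odd_p q_eq by simp

lemma q_gt_1: "q > 1"
proof -
  have "card {0::'a, 1} \<le> card (UNIV :: 'a set)"
    by (rule card_mono) auto
  then have "2 \<le> q ^ 2"
    using card_UNIV_eq by simp
  then show ?thesis
    by (cases "q \<le> 1") (auto simp: le_Suc_eq)
qed

lemma two_neq_0: "(2::'a) \<noteq> 0"
proof
  assume "(2::'a) = 0"
  then have "p dvd 2"
    using of_nat_eq_0_iff_char_dvd[of 2, where ?'a = 'a] CHAR_eq by simp
  then have "p = 2"
    using primes_dvd_imp_eq[OF prime_p two_is_prime_nat] by blast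
  with odd_p show False by simp
qed

lemma one_neq_minus_one: "(1::'a) \<noteq> -1"
  using two_neq_0 by (metis one_add_one add_eq_0_iff2)

lemma power_q_add: "(x + y :: 'a) ^ q = x ^ q + y ^ q"
  by (rule freshmans_dream') (simp_all add: CHAR_eq prime_p q_eq)

lemma power_q_uminus: "(- x :: 'a) ^ q = - (x ^ q)"
  using odd_q by (simp add: power_minus_odd)

lemma power_q_diff: "(x - y :: 'a) ^ q = x ^ q - y ^ q"
  using power_q_add[of x "- y"] by (simp add: power_q_uminus)

lemma power_q_power_q: "((x :: 'a) ^ q) ^ q = x"
  using field_power_card_eq_self[of x] card_UNIV_eq by (simp add: power2_eq_square power_mult)

lemma Fq_0: "(0::'a) \<in> Fq q"
  using q_gt_1 by (simp add: Fq_def)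

lemma Fq_add: "(x::'a) \<in> Fq q \<Longrightarrow> y \<in> Fq q \<Longrightarrow> x + y \<in> Fq q"
  by (simp add: Fq_def power_q_add)

lemma Fq_uminus: "(x::'a) \<in> Fq q \<Longrightarrow> - x \<in> Fq q"
  by (simp add: Fq_def power_q_uminus)

lemma Fq_diff: "(x::'a) \<in> Fq q \<Longrightarrow> y \<in> Fq q \<Longrightarrow> x - y \<in> Fq q"
  using Fq_add Fq_uminus by fastforce

lemma Fq_2: "(2::'a) \<in> Fq q"
  using Fq_add[OF Fq_1 Fq_1] by (simp add: one_add_one)

lemmas Fq_closed = Fq_0 Fq_1 Fq_2 Fq_add Fq_uminus Fq_diff Fq_mult Fq_divide Fq_power

lemma b_neq_0: "b \<noteq> 0"
  using b_nonsquare by (auto simp: chi2_def)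

lemma beta_notin_Fq: "\<beta> \<notin> Fq q"
proof
  assume "\<beta> \<in> Fq q"
  then have "chi2 q b = 1"
    using b_neq_0 beta_square by (auto simp: chi2_def)
  with b_nonsquare show False by simp
qed

lemma beta_power_q: "\<beta> ^ q = - \<beta>"
proof -
  have "(\<beta> ^ q) ^ 2 = (\<beta> ^ 2) ^ q"
    by (simp add: mult.commute flip: power_mult)
  also have "\<dots> = \<beta> ^ 2"
    using b_in_Fq beta_square by (simp add: Fq_def)
  finally have "(\<beta> ^ q) ^ 2 = \<beta> ^ 2" .
  then have "\<beta> ^ q = \<beta> \<or> \<beta> ^ q = - \<beta>"
    by (simp add: power2_eq_iff)
  moreover have "\<beta> ^ q \<noteq> \<beta>"
    using beta_notin_Fq by (simp add: Fq_def)
  ultimately show ?thesis by blast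
qed

lemma power_q_coords: "x \<in> Fq q \<Longrightarrow> y \<in> Fq q \<Longrightarrow> (x + y * \<beta>) ^ q = x - y * \<beta>"
  by (simp add: Fq_def power_q_add power_mult_distrib beta_power_q)

lemma coords_eq_iff:
  assumes "x \<in> Fq q" "y \<in> Fq q" "x' \<in> Fq q" "y' \<in> Fq q"
  shows "x + y * \<beta> = x' + y' * \<beta> \<longleftrightarrow> x = x' \<and> y = y'"
proof
  assume eq: "x + y * \<beta> = x' + y' * \<beta>"
  show "x = x' \<and> y = y'"
  proof (cases "y = y'")
    case False
    then have "\<beta> = (x - x') / (y' - y)"
      using eq by (simp add: field_simps)
    then have "\<beta> \<in> Fq q"
      using assms by (simp add: Fq_closed)
    with beta_notin_Fq show ?thesis ..
  qed (use eq in simp)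
qed simp

lemma coords_exist: "\<exists>x\<in>Fq q. \<exists>y\<in>Fq q. X = x + y * \<beta>"
proof -
  have beta_neq_0: "\<beta> \<noteq> 0"
    using beta_notin_Fq Fq_0 by blast
  have two_power_q: "(2::'a) ^ q = 2"
    using Fq_2 by (simp add: Fq_def)
  define x where "x = (X + X ^ q) / 2"
  define y where "y = (X - X ^ q) / (2 * \<beta>)"
  have "x ^ q = x"
    by (simp add: x_def power_divide power_q_add power_q_power_q two_power_q add.commute)
  moreover have "y ^ q = (X ^ q - X) / (2 * - \<beta>)"
    by (simp add: y_def power_divide power_q_diff power_q_power_q two_power_q beta_power_q
        power_mult_distrib)
  then have "y ^ q = y"
    by (simp add: y_def divide_minus_right minus_divide_left)
  moreover have "y * \<beta> = (X - X ^ q) / 2"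
    using beta_neq_0 by (simp add: y_def)
  then have "X = x + y * \<beta>"
    using two_neq_0 by (simp add: x_def field_simps)
  ultimately show ?thesis
    by (auto simp: Fq_def)
qed

lemma bij_betw_coords: "bij_betw (\<lambda>(x, y). x + y * \<beta>) (Fq q \<times> Fq q) UNIV"
  unfolding bij_betw_def inj_on_def using coords_eq_iff coords_exist by fastforce

lemma card_Fq: "card (Fq q :: 'a set) = q"
proof -
  have "card (Fq q :: 'a set) ^ 2 = q ^ 2"
    using bij_betw_same_card[OF bij_betw_coords] card_UNIV_eq
    by (simp add: card_cartesian_product power2_eq_square)
  then show ?thesis
    using power_eq_iff_eq_base[of 2 "card (Fq q :: 'a set)" q] by simp
qed

section \<open>Euler's criterion\<close>

lemma power_q_minus_1_eq_1:
  assumes "(x::'a) \<in> Fq q" and "x \<noteq> 0"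
  shows "x ^ (q - 1) = 1"
proof -
  have "x * x ^ (q - 1) = x ^ q"
    using q_gt_1 by (simp flip: power_Suc)
  also have "\<dots> = x * 1"
    using assms(1) by (simp add: Fq_def)
  finally show ?thesis
    using assms(2) by simp
qed

lemma double_half_q_minus_1: "2 * ((q - 1) div 2) = q - 1"
  using odd_q by presburger

lemma card_nonzero_squares_Fq_ge: "(q - 1) div 2 \<le> card {y ^ 2 | y :: 'a. y \<in> Fq q \<and> y \<noteq> 0}"
proof -
  let ?S = "{y ^ 2 | y :: 'a. y \<in> Fq q \<and> y \<noteq> 0}"
  have "Fq q - {0} \<subseteq> (\<Union>s\<in>?S. {y. y ^ 2 = s})"
    by auto
  then have "card (Fq q - {0::'a}) \<le> card (\<Union>s\<in>?S. {y::'a. y ^ 2 = s})"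
    by (intro card_mono) auto
  also have "\<dots> \<le> (\<Sum>s\<in>?S. card {y::'a. y ^ 2 = s})"
    by (rule card_UN_le) simp
  also have "\<dots> \<le> (\<Sum>s\<in>?S. 2)"
  proof (rule sum_mono)
    fix s assume "s \<in> ?S"
    then obtain r where "r ^ 2 = s" by blast
    then have "{y. y ^ 2 = s} \<subseteq> {r, - r}"
      by (auto simp: power2_eq_iff)
    then have "card {y. y ^ 2 = s} \<le> card {r, - r}"
      by (intro card_mono) auto
    also have "\<dots> \<le> 2"
      by (simp add: card_insert_if)
    finally show "card {y. y ^ 2 = s} \<le> 2" .
  qed
  finally have "q - 1 \<le> 2 * card ?S"
    using card_Fq Fq_0 by (simp add: card_Diff_singleton)
  then show ?thesis
    by linarith
qed

lemma nonzero_squares_Fq_eq: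
  "{y ^ 2 | y :: 'a. y \<in> Fq q \<and> y \<noteq> 0} = {x. x ^ ((q - 1) div 2) = 1}"
  (is "?S = ?R")
proof (rule card_subset_eq)
  show "?S \<subseteq> ?R"
    using power_q_minus_1_eq_1 double_half_q_minus_1 by (auto simp flip: power_mult)
  have "0 < (q - 1) div 2"
    using q_gt_1 odd_q by presburger
  then have "card ?R \<le> (q - 1) div 2"
    by (rule card_roots_unity_le)
  moreover have "card ?S \<le> card ?R"
    using \<open>?S \<subseteq> ?R\<close> by (intro card_mono) auto
  ultimately show "card ?S = card ?R"
    using card_nonzero_squares_Fq_ge by linarith
qed auto

theorem euler_criterion:
  assumes "(x::'a) \<in> Fq q" and "x \<noteq> 0"
  shows "of_int (chi2 q x) = x ^ ((q - 1) div 2)"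
proof (cases "\<exists>y\<in>Fq q. y ^ 2 = x")
  case True
  then have "x \<in> {y ^ 2 | y :: 'a. y \<in> Fq q \<and> y \<noteq> 0}"
    using assms(2) by auto
  then show ?thesis
    using True assms(2) by (simp add: nonzero_squares_Fq_eq chi2_def)
next
  case False
  then have "x \<notin> {x. x ^ ((q - 1) div 2) = 1}"
    unfolding nonzero_squares_Fq_eq[symmetric] by blast
  then have "x ^ ((q - 1) div 2) \<noteq> 1"
    by simp
  moreover have "(x ^ ((q - 1) div 2)) ^ 2 = 1"
    using power_q_minus_1_eq_1[OF assms] double_half_q_minus_1
    by (simp add: mult.commute flip: power_mult)
  ultimately have "x ^ ((q - 1) div 2) = -1"
    by (simp add: power2_eq_1_iff)
  then show ?thesis
    using False assms(2) by (simp add: chi2_def)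
qed

lemma chi2_mult:
  assumes "(x::'a) \<in> Fq q" and "y \<in> Fq q" and "x \<noteq> 0" and "y \<noteq> 0"
  shows "chi2 q (x * y) = chi2 q x * chi2 q y"
proof -
  have "(of_int (chi2 q (x * y)) :: 'a) = of_int (chi2 q x * chi2 q y)"
    using assms by (simp add: euler_criterion Fq_mult power_mult_distrib)
  then show ?thesis
    using chi2_cases[of x q] chi2_cases[of y q] chi2_cases[of "x * y" q] assms one_neq_minus_one
    by auto
qed

lemma chi2_divide:
  assumes "(x::'a) \<in> Fq q" and "y \<in> Fq q" and "x \<noteq> 0" and "y \<noteq> 0"
  shows "chi2 q (x / y) = chi2 q x * chi2 q y"
proof -
  have "chi2 q x = chi2 q (x / y) * chi2 q y"
    using chi2_mult[of "x / y" y] assms by (simp add: Fq_divide)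
  then show ?thesis
    using chi2_cases[of y q] assms(4) by auto
qed

lemma chi2_minus_1: "chi2 q (-1::'a) = (if q mod 4 = 1 then 1 else -1)"
proof -
  have "(of_int (chi2 q (-1::'a)) :: 'a) = (-1) ^ ((q - 1) div 2)"
    by (simp add: euler_criterion Fq_closed)
  moreover have "even ((q - 1) div 2) \<longleftrightarrow> q mod 4 = 1"
    using odd_q by presburger
  ultimately show ?thesis
    using chi2_cases[of "-1::'a" q] one_neq_minus_one by (auto split: if_splits)
qed

lemma card_sqrt_Fq:
  assumes "(s::'a) \<noteq> 0"
  shows "card {x \<in> Fq q. x ^ 2 = s} = (if chi2 q s = 1 then 2 else 0)"
proof (cases "\<exists>r\<in>Fq q. r ^ 2 = s")
  case True
  then obtain r where "r \<in> Fq q" and "r ^ 2 = s" by blast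
  then have "{x \<in> Fq q. x ^ 2 = s} = {r, - r}"
    by (auto simp: power2_eq_iff Fq_uminus)
  moreover have "r \<noteq> - r"
    using \<open>r ^ 2 = s\<close> assms two_neq_0 by (auto simp: eq_neg_iff_add_eq_0 simp flip: mult_2)
  ultimately show ?thesis
    using True assms by (simp add: chi2_def)
next
  case False
  then show ?thesis
    using assms by (auto simp: chi2_def)
qed

lemma card_fourth_roots_Fq:
  assumes "(s::'a) \<noteq> 0"
  shows "card {x \<in> Fq q. x ^ 4 = s ^ 2} =
           (if chi2 q s = 1 then 2 else 0) + (if chi2 q (- s) = 1 then 2 else 0)"
proof -
  have "x ^ 4 = s ^ 2 \<longleftrightarrow> x ^ 2 = s \<or> x ^ 2 = - s" for x
    using power2_eq_iff[of "x ^ 2" s] by (simp flip: power_mult)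
  then have "{x \<in> Fq q. x ^ 4 = s ^ 2} = {x \<in> Fq q. x ^ 2 = s} \<union> {x \<in> Fq q. x ^ 2 = - s}"
    by auto
  moreover have "s \<noteq> - s"
    using assms two_neq_0 by (auto simp: eq_neg_iff_add_eq_0 simp flip: mult_2)
  ultimately show ?thesis
    using assms by (simp add: card_Un_disjoint disjoint_iff card_sqrt_Fq)
qed

section \<open>Fibres of f\<close>

lemma fmap_coords:
  assumes "x \<in> Fq q" and "y \<in> Fq q"
  shows "fmap q a (x + y * \<beta>) = ((1 + a) * x ^ 2 + (a - 1) * b * y ^ 2) + (2 * a * x * y) * \<beta>"
proof -
  have "(x + y * \<beta>) ^ (q + 1) = (x - y * \<beta>) * (x + y * \<beta>)"
    using power_q_coords[OF assms] by simp
  then show ?thesis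
    unfolding fmap_def beta_square[symmetric] by (simp add: algebra_simps power2_eq_square)
qed

lemma card_fmap_fibre_coords:
  assumes "a \<in> Fq q" and "u \<in> Fq q" and "v \<in> Fq q"
  shows "card {X. fmap q a X = u + v * \<beta>} =
    card {(x, y) \<in> Fq q \<times> Fq q. (1 + a) * x ^ 2 + (a - 1) * b * y ^ 2 = u \<and> 2 * a * x * y = v}"
    (is "card ?fibre = card ?P")
proof -
  let ?emb = "\<lambda>(x, y). x + y * \<beta>"
  have "fmap q a (x + y * \<beta>) = u + v * \<beta> \<longleftrightarrow>
          (1 + a) * x ^ 2 + (a - 1) * b * y ^ 2 = u \<and> 2 * a * x * y = v"
    if "x \<in> Fq q" and "y \<in> Fq q" for x y
    unfolding fmap_coords[OF that]
    using that assms b_in_Fq by (intro coords_eq_iff) (simp_all add: Fq_closed)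
  note coords_iff = this
  have "?fibre = ?emb ` ?P"
  proof (intro set_eqI iffI)
    fix X assume "X \<in> ?fibre"
    moreover obtain x y where "x \<in> Fq q" and "y \<in> Fq q" and "X = x + y * \<beta>"
      using coords_exist by blast
    ultimately show "X \<in> ?emb ` ?P"
      using coords_iff by (auto intro!: image_eqI[of _ _ "(x, y)"])
  qed (use coords_iff in auto)
  moreover have "inj_on ?emb ?P"
    using bij_betw_coords by (auto simp: bij_betw_def intro: inj_on_subset)
  ultimately show ?thesis
    by (simp add: card_image)
qed

lemma chi2_gamma_a_square:
  assumes "a \<in> Fq q" and "a \<noteq> 1" and "a \<noteq> -1"
  shows "chi2 q (- ((a - 1) * b / (a + 1))) = - chi2 q (1 - a ^ 2)"
proof -
  have "a + 1 \<noteq> 0" and "1 - a ^ 2 \<noteq> 0"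
    using assms by (auto simp: add_eq_0_iff2 power2_eq_1_iff)
  have "1 - a ^ 2 = (1 - a) * (a + 1)"
    by (simp add: algebra_simps power2_eq_square)
  then have "(1 - a ^ 2) * b / (a + 1) ^ 2 = ((1 - a) * b) * (a + 1) / ((a + 1) * (a + 1))"
    by (simp add: power2_eq_square mult_ac)
  also have "\<dots> = (1 - a) * b / (a + 1)"
    using \<open>a + 1 \<noteq> 0\<close> by (rule nonzero_mult_divide_mult_cancel_right)
  also have "\<dots> = - ((a - 1) * b / (a + 1))"
    by (metis minus_diff_eq minus_divide_left mult_minus_left)
  finally have "- ((a - 1) * b / (a + 1)) = (1 - a ^ 2) * b / (a + 1) ^ 2" ..
  moreover have "chi2 q ((1 - a ^ 2) * b / (a + 1) ^ 2) = chi2 q (1 - a ^ 2) * chi2 q b"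
    using \<open>a + 1 \<noteq> 0\<close> \<open>1 - a ^ 2 \<noteq> 0\<close> assms(1) b_in_Fq b_neq_0
    by (simp add: chi2_divide chi2_mult chi2_square Fq_closed)
  ultimately show ?thesis
    using b_nonsquare by simp
qed

context
  fixes a \<alpha> :: 'a
  assumes fibre_assms: "a \<in> Fq q" "a \<noteq> 0" "a \<noteq> 1" "a \<noteq> -1" "\<alpha> \<in> Fq q" "\<alpha> \<noteq> 0"
begin

lemma one_plus_a_neq_0: "1 + a \<noteq> 0" and a_minus_1_neq_0: "a - 1 \<noteq> 0"
  using fibre_assms by (auto simp: add_eq_0_iff)

lemma gamma_a_neq_0: "\<gamma> ^ 2 = - ((a - 1) * b / (a + 1)) \<Longrightarrow> \<gamma> \<noteq> 0"
  using one_plus_a_neq_0 a_minus_1_neq_0 b_neq_0 by (auto simp: add.commute)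

lemma card_fmap_fibre_Fq:
  "card {X. fmap q a X = \<alpha>} =
       (if chi2 q (\<alpha> * (a - 1)) = 1 \<and> chi2 q (\<alpha> * (a + 1)) = -1 then 0
        else if chi2 q (\<alpha> * (a - 1)) = -1 \<and> chi2 q (\<alpha> * (a + 1)) = 1 then 4
        else 2)"
proof -
  note nonzero = fibre_assms one_plus_a_neq_0 a_minus_1_neq_0 b_neq_0 two_neq_0
  have "card {X. fmap q a X = \<alpha>} =
          card {x \<in> Fq q. x ^ 2 = \<alpha> / (1 + a)} + card {y \<in> Fq q. y ^ 2 = \<alpha> / ((a - 1) * b)}"
    using card_fmap_fibre_coords[of a \<alpha> 0]
      card_conic_on_axes[of "Fq q" "1 + a" "(a - 1) * b" "2 * a" \<alpha>] nonzero
    by (simp add: Fq_closed)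
  moreover have "chi2 q (\<alpha> / (1 + a)) = chi2 q (\<alpha> * (a + 1))"
    using nonzero by (simp add: chi2_divide chi2_mult Fq_closed add.commute)
  moreover have "chi2 q (\<alpha> / ((a - 1) * b)) = - chi2 q (\<alpha> * (a - 1))"
    using nonzero b_in_Fq b_nonsquare by (simp add: chi2_divide chi2_mult Fq_closed)
  ultimately show ?thesis
    using nonzero chi2_cases[of "\<alpha> * (a + 1)" q] chi2_cases[of "\<alpha> * (a - 1)" q]
    by (auto simp: card_sqrt_Fq add.commute)
qed

lemma card_fmap_fibre_beta:
  "card {X. fmap q a X = \<alpha> * \<beta>} =
     card {x \<in> Fq q. x ^ 4 = (\<alpha> / (2 * a)) ^ 2 * (- ((a - 1) * b / (a + 1)))}"
proof -
  have "card {X. fmap q a X = \<alpha> * \<beta>} =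
          card {x \<in> Fq q. x ^ 4 = - ((a - 1) * b) / (1 + a) * (\<alpha> / (2 * a)) ^ 2}"
    using card_fmap_fibre_coords[of a 0 \<alpha>]
      card_conic_hyperbola[where F = "Fq q" and c = "1 + a" and d = "(a - 1) * b" and e = "2 * a"
        and v = \<alpha>]
      fibre_assms one_plus_a_neq_0 a_minus_1_neq_0 b_neq_0 two_neq_0
    by (simp add: Fq_closed)
  also have "- ((a - 1) * b) / (1 + a) * (\<alpha> / (2 * a)) ^ 2 =
               (\<alpha> / (2 * a)) ^ 2 * (- ((a - 1) * b / (a + 1)))"
    by (simp add: add.commute mult.commute)
  finally show ?thesis .
qed

lemma card_fmap_fibre_beta_eq_0:
  assumes "chi2 q (1 - a ^ 2) = 1"
  shows "card {X. fmap q a X = \<alpha> * \<beta>} = 0"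
proof -
  have "\<alpha> / (2 * a) \<in> Fq q" and "\<alpha> / (2 * a) \<noteq> 0"
    using fibre_assms two_neq_0 by (simp_all add: Fq_closed)
  moreover have "chi2 q (- ((a - 1) * b / (a + 1))) = -1"
    using chi2_gamma_a_square fibre_assms assms by simp
  ultimately have "{x \<in> Fq q. x ^ 4 = (\<alpha> / (2 * a)) ^ 2 * (- ((a - 1) * b / (a + 1)))} = {}"
    using fourth_power_neq_if_nonsquare by blast
  then show ?thesis
    using card_fmap_fibre_beta by simp
qed

lemma card_fmap_fibre_beta_sqrt:
  fixes \<gamma> :: 'a
  assumes "\<gamma> \<in> Fq q" and "\<gamma> ^ 2 = - ((a - 1) * b / (a + 1))"
  shows "card {X. fmap q a X = \<alpha> * \<beta>} =
           (if chi2 q (2 * \<gamma> * \<alpha> * a) = 1 then 2 else 0) +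
           (if chi2 q (-1::'a) * chi2 q (2 * \<gamma> * \<alpha> * a) = 1 then 2 else 0)"
proof -
  have "\<gamma> \<noteq> 0"
    using gamma_a_neq_0[OF assms(2)] .
  have "2 * a \<noteq> 0"
    using fibre_assms(2) two_neq_0 by simp
  define s where "s = \<gamma> * (\<alpha> / (2 * a))"
  have "s \<in> Fq q" and "s \<noteq> 0"
    using fibre_assms assms \<open>\<gamma> \<noteq> 0\<close> \<open>2 * a \<noteq> 0\<close> by (simp_all add: s_def Fq_closed)
  have "s ^ 2 = (\<alpha> / (2 * a)) ^ 2 * \<gamma> ^ 2"
    unfolding s_def by (simp only: power_mult_distrib mult.commute)
  then have "card {X. fmap q a X = \<alpha> * \<beta>} = card {x \<in> Fq q. x ^ 4 = s ^ 2}"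
    using card_fmap_fibre_beta unfolding assms(2)[symmetric] by (simp only:)
  moreover have "chi2 q s = chi2 q (2 * \<gamma> * \<alpha> * a)"
  proof -
    have "(2 * \<gamma> * \<alpha> * a) / (2 * a) ^ 2 = (\<gamma> * \<alpha>) * (2 * a) / ((2 * a) * (2 * a))"
      by (simp only: power2_eq_square mult_ac)
    also have "\<dots> = \<gamma> * \<alpha> / (2 * a)"
      by (rule nonzero_mult_divide_mult_cancel_right[OF \<open>2 * a \<noteq> 0\<close>])
    also have "\<dots> = s"
      by (simp add: s_def)
    finally have "s = (2 * \<gamma> * \<alpha> * a) / (2 * a) ^ 2" ..
    moreover have "2 * a \<in> Fq q" and "2 * \<gamma> * \<alpha> * a \<in> Fq q" and "2 * \<gamma> * \<alpha> * a \<noteq> 0"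
      using fibre_assms assms \<open>\<gamma> \<noteq> 0\<close> two_neq_0 by (simp_all add: Fq_closed)
    ultimately have "chi2 q s = chi2 q (2 * \<gamma> * \<alpha> * a) * chi2 q ((2 * a) ^ 2)"
      using \<open>2 * a \<noteq> 0\<close> by (simp only:) (intro chi2_divide Fq_power power_not_zero)
    then show ?thesis
      using chi2_square[OF \<open>2 * a \<in> Fq q\<close> \<open>2 * a \<noteq> 0\<close>] by simp
  qed
  moreover have "chi2 q (- s) = chi2 q (-1::'a) * chi2 q s"
    using chi2_mult[of "-1" s] \<open>s \<in> Fq q\<close> \<open>s \<noteq> 0\<close> by (simp add: Fq_closed)
  ultimately show ?thesis
    using \<open>s \<noteq> 0\<close> by (simp add: card_fourth_roots_Fq)
qed

lemma card_fmap_fibre_beta_mod_4_eq_3: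
  assumes "q mod 4 = 3"
  shows "card {X. fmap q a X = \<alpha> * \<beta>} = (if chi2 q (1 - a ^ 2) = 1 then 0 else 2)"
proof (cases "chi2 q (1 - a ^ 2) = 1")
  case True
  then show ?thesis
    using card_fmap_fibre_beta_eq_0 by simp
next
  case False
  have "1 - a ^ 2 \<noteq> 0"
    using fibre_assms by (auto simp: power2_eq_1_iff)
  then have "chi2 q (- ((a - 1) * b / (a + 1))) = 1"
    using False chi2_cases[of "1 - a ^ 2" q] chi2_gamma_a_square fibre_assms by auto
  then obtain \<gamma> where \<gamma>: "\<gamma> \<in> Fq q" "\<gamma> ^ 2 = - ((a - 1) * b / (a + 1))"
    by (auto simp: chi2_def split: if_splits)
  then have "chi2 q (2 * \<gamma> * \<alpha> * a) = 1 \<or> chi2 q (2 * \<gamma> * \<alpha> * a) = -1"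
    using chi2_cases[of "2 * \<gamma> * \<alpha> * a" q] gamma_a_neq_0[OF \<gamma>(2)] fibre_assms two_neq_0
    by simp
  moreover have "chi2 q (-1::'a) = -1"
    using chi2_minus_1 assms by simp
  ultimately show ?thesis
    using card_fmap_fibre_beta_sqrt[OF \<gamma>] False by auto
qed

end

end

theorem theorem21:
  fixes p k q :: nat and a b \<beta> \<alpha> :: "'a::{field,finite}"
  assumes "prime p" and "odd p" and "k \<ge> 1" and "q = p ^ k"
    and "card (UNIV :: 'a set) = q ^ 2"
    and "a \<in> Fq q" and "a \<noteq> 0" and "a \<noteq> 1" and "a \<noteq> -1"
    and "b \<in> Fq q" and "chi2 q b = -1"
    and "\<beta> ^ 2 = b"
    and "\<alpha> \<in> Fq q" and "\<alpha> \<noteq> 0"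
  shows
    "card {X. fmap q a X = \<alpha>} =
       (if chi2 q (\<alpha> * (a - 1)) = 1 \<and> chi2 q (\<alpha> * (a + 1)) = -1 then 0
        else if chi2 q (\<alpha> * (a - 1)) = -1 \<and> chi2 q (\<alpha> * (a + 1)) = 1 then 4
        else 2)
     \<and> (q mod 4 = 3 \<longrightarrow>
          card {X. fmap q a X = \<alpha> * \<beta>} = (if chi2 q (1 - a ^ 2) = 1 then 0 else 2))
     \<and> (q mod 4 = 1 \<longrightarrow>
          (chi2 q (1 - a ^ 2) = 1 \<longrightarrow> card {X. fmap q a X = \<alpha> * \<beta>} = 0)
        \<and> (chi2 q (1 - a ^ 2) = -1 \<longrightarrow>
             (\<forall>\<gamma>\<in>Fq q. \<gamma> ^ 2 = - ((a - 1) * b / (a + 1)) \<longrightarrow>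
                card {X. fmap q a X = \<alpha> * \<beta>} =
                  (if chi2 q (2 * \<gamma> * \<alpha> * a) = 1 then 4 else 0))))"
proof -
  interpret quadratic_extension p k q b \<beta>
    using assms by unfold_locales auto
  note a_assms = assms(6-9) and alpha_assms = assms(13-14)
  have "card {X. fmap q a X = \<alpha> * \<beta>} = (if chi2 q (2 * \<gamma> * \<alpha> * a) = 1 then 4 else 0)"
    if "q mod 4 = 1" and "\<gamma> \<in> Fq q" and "\<gamma> ^ 2 = - ((a - 1) * b / (a + 1))" for \<gamma>
    using chi2_minus_1 that(1)
    by (subst card_fmap_fibre_beta_sqrt[OF a_assms alpha_assms that(2-3)]) simp
  then show ?thesis
    using card_fmap_fibre_Fq[OF a_assms alpha_assms]
      card_fmap_fibre_beta_mod_4_eq_3[OF a_assms alpha_assms]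
      card_fmap_fibre_beta_eq_0[OF a_assms alpha_assms]
    by auto
qed

end
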